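(* (Tail-sum formula) Let $\rho$ be a density operator on $H$ and let $f\ge 0$ be a random variable. Then $$\int f\,d\mu_\rho=\int_0^\infty\mu_\rho\left(\{x\in\Omega: f(x)>\lambda\}\right)d\lambda,$$ where $d\lambda$ is Lebesgue measure on $\mathbb{R}$.
   Context: $(\Omega,\mathcal{A},\nu)$ is a probability space and $H=L_2(\Omega,\mathcal{A},\nu)$ is the complex Hilbert space with inner product $\langle f,g\rangle=\int\bar f g\,d\nu$. A random variable is a real-valued $f\in H$; $\chi_A$ is the characteristic function of $A\in\mathcal{A}$, and $\mu(A)$ is the operator $u\mapsto\left(\int_A u\,d\nu\right)\chi_A$ on $H$. A density operator is a positive trace-class operator of trace $1$; for a density operator $\rho$, $\mu_\rho(A)=\mathrm{tr}[\rho\mu(A)]$. For a random variable $f\ge 0$, its quantization $\widehat f$ is the operator $(\widehat f u)(y)=\int\min[f(x),f(y)]\,u(x)\,d\nu(x)$, and the $q$-integral is $\int f\,d\mu_\rho=\mathrm{tr}(\rho\widehat f)$. *)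

theory Defs
  imports "HOL-Probability.Probability"
begin

text \<open>The complex Hilbert space H = L2(Omega, A, nu) is represented by the set of
  (representatives of) square-integrable complex functions; operators on H are
  represented by maps on functions that respect a.e.-equality.\<close>

definition L2 :: "'a measure \<Rightarrow> ('a \<Rightarrow> complex) set" where
  "L2 M = {u. u \<in> borel_measurable M \<and> integrable M (\<lambda>x. (cmod (u x))\<^sup>2)}"

definition inner_L2 :: "'a measure \<Rightarrow> ('a \<Rightarrow> complex) \<Rightarrow> ('a \<Rightarrow> complex) \<Rightarrow> complex" where
  "inner_L2 M f g = (LINT x|M. cnj (f x) * g x)"

definition norm2_L2 :: "'a measure \<Rightarrow> ('a \<Rightarrow> complex) \<Rightarrow> real" where
  "norm2_L2 M u = (LINT x|M. (cmod (u x))\<^sup>2)"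

definition onb :: "'a measure \<Rightarrow> ('a \<Rightarrow> complex) set \<Rightarrow> bool" where
  "onb M B \<longleftrightarrow> B \<subseteq> L2 M
     \<and> (\<forall>b\<in>B. \<forall>b'\<in>B. inner_L2 M b b' = (if b = b' then 1 else 0))
     \<and> (\<forall>u\<in>L2 M. (\<forall>b\<in>B. inner_L2 M b u = 0) \<longrightarrow> norm2_L2 M u = 0)"

definition bounded_op :: "'a measure \<Rightarrow> (('a \<Rightarrow> complex) \<Rightarrow> ('a \<Rightarrow> complex)) \<Rightarrow> bool" where
  "bounded_op M T \<longleftrightarrow>
     (\<forall>u\<in>L2 M. T u \<in> L2 M)
   \<and> (\<forall>u\<in>L2 M. \<forall>v\<in>L2 M. (AE x in M. u x = v x) \<longrightarrow> (AE x in M. T u x = T v x))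
   \<and> (\<forall>u\<in>L2 M. \<forall>v\<in>L2 M. \<forall>c::complex.
        AE x in M. T (\<lambda>y. u y + c * v y) x = T u x + c * T v x)
   \<and> (\<exists>K. \<forall>u\<in>L2 M. norm2_L2 M (T u) \<le> K * norm2_L2 M u)"

definition positive_op :: "'a measure \<Rightarrow> (('a \<Rightarrow> complex) \<Rightarrow> ('a \<Rightarrow> complex)) \<Rightarrow> bool" where
  "positive_op M T \<longleftrightarrow> (\<forall>u\<in>L2 M. Im (inner_L2 M u (T u)) = 0 \<and> 0 \<le> Re (inner_L2 M u (T u)))"

definition trace_op :: "'a measure \<Rightarrow> (('a \<Rightarrow> complex) \<Rightarrow> ('a \<Rightarrow> complex)) \<Rightarrow> complex" where
  "trace_op M T = infsum (\<lambda>b. inner_L2 M b (T b)) (SOME B. onb M B)"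

text \<open>Density operator: positive trace-class operator of trace 1 (for a positive
  operator this means the diagonal sum in an orthonormal basis equals 1).\<close>
definition density_op :: "'a measure \<Rightarrow> (('a \<Rightarrow> complex) \<Rightarrow> ('a \<Rightarrow> complex)) \<Rightarrow> bool" where
  "density_op M \<rho> \<longleftrightarrow> bounded_op M \<rho> \<and> positive_op M \<rho>
     \<and> (\<exists>B. onb M B \<and> ((\<lambda>b. inner_L2 M b (\<rho> b)) has_sum 1) B)"

definition mu_op :: "'a measure \<Rightarrow> 'a set \<Rightarrow> ('a \<Rightarrow> complex) \<Rightarrow> ('a \<Rightarrow> complex)" where
  "mu_op M A u = (\<lambda>y. (LINT x:A|M. u x) * indicator A y)"

definition mu_rho :: "'a measure \<Rightarrow> (('a \<Rightarrow> complex) \<Rightarrow> ('a \<Rightarrow> complex)) \<Rightarrow> 'a set \<Rightarrow> complex" where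
  "mu_rho M \<rho> A = trace_op M (\<rho> \<circ> mu_op M A)"

definition quant :: "'a measure \<Rightarrow> ('a \<Rightarrow> real) \<Rightarrow> ('a \<Rightarrow> complex) \<Rightarrow> ('a \<Rightarrow> complex)" where
  "quant M f u = (\<lambda>y. LINT x|M. complex_of_real (min (f x) (f y)) * u x)"

definition q_integral :: "'a measure \<Rightarrow> (('a \<Rightarrow> complex) \<Rightarrow> ('a \<Rightarrow> complex)) \<Rightarrow> ('a \<Rightarrow> real) \<Rightarrow> complex" where
  "q_integral M \<rho> f = trace_op M (\<rho> \<circ> quant M f)"

end

theory Submission
  imports Defs
begin

text \<open>
  Tail-sum formula for the q-integral. Write A(l) = {x. f x > l} and let B be an orthonormal
  family in L2(nu) (the traces in the statement are diagonal sums over such a family). For b in B: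

    (1) <b, rho mu(A) b> = <chi_A, b> <rho b, chi_A>, because mu(A) b = <chi_A, b> chi_A
        and rho, being positive, is Hermitian;
    (2) <b, rho f^ b> = integral over l >= 0 of <chi_A(l), b> <rho b, chi_A(l)>, by Fubini,
        since min (f x) (f y) is the Lebesgue measure of {l >= 0. l < f x and l < f y}.

  It remains to exchange the sum over B with the integral over l. By Bessel's inequality the
  finite partial sums of |<chi_A, b> <rho b, chi_A>| are at most (1 + |K|)/2 * nu(A), where K
  bounds rho, and l |-> nu(A(l)) is integrable on [0, oo) because f is integrable. Only countably
  many b contribute: l |-> <chi_A(l), b> is right-continuous, so it vanishes identically once it
  vanishes at all rationals, and for each rational l Bessel's inequality leaves only countably
  many b with a nonzero coefficient. Dominated convergence along an enumeration of these b gives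
  the exchange.
\<close>

definition enum_family :: "'b set \<Rightarrow> ('b \<Rightarrow> 'v::zero) \<Rightarrow> nat \<Rightarrow> 'v" where
  "enum_family S a n = (if n \<in> to_nat_on S ` S then a (from_nat_into S n) else 0)"

lemma enum_family_enumerates:
  assumes "countable S"
  shows "inj_on (from_nat_into S) (to_nat_on S ` S)"
    and "from_nat_into S ` to_nat_on S ` S = S"
  using assms by (auto intro: inj_on_inverseI[where g="to_nat_on S"] simp: image_image)

lemma has_sum_enum_family:
  fixes a :: "'b \<Rightarrow> 'v::{comm_monoid_add, topological_space}"
  assumes S: "countable S" "S \<subseteq> B" and zero: "\<And>b. b \<in> B \<Longrightarrow> b \<notin> S \<Longrightarrow> a b = 0"
    and enum: "(enum_family S a has_sum x) UNIV"
  shows "(a has_sum x) B"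
proof -
  define T where "T = to_nat_on S ` S"
  define e where "e = from_nat_into S"
  have "((a \<circ> e) has_sum x) T"
    using enum unfolding enum_family_def T_def[symmetric] e_def[symmetric]
    by (subst (asm) has_sum_cong_neutral[where T=T]) auto
  then have "(a has_sum x) (e ` T)"
    using enum_family_enumerates(1)[OF S(1)] unfolding T_def e_def by (subst has_sum_reindex)
  then have "(a has_sum x) S"
    using enum_family_enumerates(2)[OF S(1)] unfolding T_def e_def by simp
  then show ?thesis
    by (subst (asm) has_sum_cong_neutral[where T=B]) (use S zero in auto)
qed

lemma sum_enum_family:
  fixes a :: "'b \<Rightarrow> 'v::comm_monoid_add"
  assumes S: "countable S" and K: "finite K"
  defines "F \<equiv> from_nat_into S ` (K \<inter> to_nat_on S ` S)"
  shows "(\<Sum>n\<in>K. enum_family S a n) = (\<Sum>b\<in>F. a b)" and "finite F" and "F \<subseteq> S"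
proof -
  have "(\<Sum>n\<in>K. enum_family S a n) = (\<Sum>n\<in>K \<inter> to_nat_on S ` S. a (from_nat_into S n))"
    unfolding enum_family_def by (subst sum.inter_restrict[OF K]) (auto intro!: sum.cong)
  also have "\<dots> = (\<Sum>b\<in>F. a b)"
    unfolding F_def using enum_family_enumerates(1)[OF S]
    by (subst sum.reindex) (auto intro: inj_on_subset)
  finally show "(\<Sum>n\<in>K. enum_family S a n) = (\<Sum>b\<in>F. a b)" .
  show "finite F" "F \<subseteq> S" unfolding F_def using K enum_family_enumerates(2)[OF S] by auto
qed

lemma dominated_series_integral:
  fixes h :: "nat \<Rightarrow> 'c \<Rightarrow> 'v::{banach, second_countable_topology}" and D :: "'c \<Rightarrow> real"
  assumes int: "\<And>n. integrable N (h n)"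
    and dom: "\<And>K l. finite K \<Longrightarrow> (\<Sum>n\<in>K. norm (h n l)) \<le> D l"
    and D: "integrable N D"
  shows "((\<lambda>n. h n l) has_sum (\<Sum>n. h n l)) UNIV"
    and "integrable N (\<lambda>l. \<Sum>n. h n l)"
    and "((\<lambda>n. integral\<^sup>L N (h n)) has_sum integral\<^sup>L N (\<lambda>l. \<Sum>n. h n l)) UNIV"
proof -
  have summable_pointwise: "summable (\<lambda>n. norm (h n l))" for l
    by (rule summableI_nonneg_bounded[where x="D l"]) (auto intro: dom)
  have summable_integrals: "summable (\<lambda>n. \<integral>x. norm (h n x) \<partial>N)"
  proof (rule summableI_nonneg_bounded[where x="integral\<^sup>L N D"])
    fix n
    have "(\<Sum>i<n. \<integral>x. norm (h i x) \<partial>N) = (\<integral>x. (\<Sum>i<n. norm (h i x)) \<partial>N)"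
      by (rule Bochner_Integration.integral_sum[symmetric]) (use int in auto)
    also have "\<dots> \<le> integral\<^sup>L N D"
      by (rule Bochner_Integration.integral_mono) (use int D dom in auto)
    finally show "(\<Sum>i<n. \<integral>x. norm (h i x) \<partial>N) \<le> integral\<^sup>L N D" .
  qed simp
  show "((\<lambda>n. h n l) has_sum (\<Sum>n. h n l)) UNIV"
    using summable_pointwise
    by (rule norm_summable_imp_has_sum) (rule summable_sums[OF summable_norm_cancel[OF summable_pointwise]])
  show "integrable N (\<lambda>l. \<Sum>n. h n l)"
    by (rule integrable_suminf[OF int _ summable_integrals]) (use summable_pointwise in auto)
  have "summable (\<lambda>n. norm (integral\<^sup>L N (h n)))"
    by (rule summable_comparison_test[OF _ summable_integrals])
      (auto intro!: exI[of _ 0] integral_norm_bound)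
  moreover have "(\<lambda>n. integral\<^sup>L N (h n)) sums (\<integral>l. (\<Sum>n. h n l) \<partial>N)"
    by (rule sums_integral[OF int _ summable_integrals]) (use summable_pointwise in auto)
  ultimately show "((\<lambda>n. integral\<^sup>L N (h n)) has_sum integral\<^sup>L N (\<lambda>l. \<Sum>n. h n l)) UNIV"
    by (rule norm_summable_imp_has_sum)
qed

lemma infsum_integral_interchange:
  fixes g :: "'b \<Rightarrow> 'c \<Rightarrow> 'v::{banach, second_countable_topology}" and D :: "'c \<Rightarrow> real"
  assumes S: "countable S" "S \<subseteq> B"
    and zero: "\<And>b l. b \<in> B \<Longrightarrow> b \<notin> S \<Longrightarrow> g b l = 0"
    and int: "\<And>b. b \<in> B \<Longrightarrow> integrable N (g b)"
    and dom: "\<And>F l. finite F \<Longrightarrow> F \<subseteq> B \<Longrightarrow> (\<Sum>b\<in>F. norm (g b l)) \<le> D l"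
    and D: "integrable N D"
  shows "integrable N (\<lambda>l. infsum (\<lambda>b. g b l) B)"
    and "((\<lambda>b. integral\<^sup>L N (g b)) has_sum integral\<^sup>L N (\<lambda>l. infsum (\<lambda>b. g b l) B)) B"
proof -
  define h where "h n = (\<lambda>l. enum_family S (\<lambda>b. g b l) n)" for n
  have h_cases: "h n = (if n \<in> to_nat_on S ` S then g (from_nat_into S n) else (\<lambda>_. 0))" for n
    by (simp add: h_def enum_family_def fun_eq_iff)
  have h_int: "integrable N (h n)" for n
    using int S enum_family_enumerates(2)[OF S(1)] unfolding h_cases by auto
  have h_integral: "integral\<^sup>L N (h n) = enum_family S (\<lambda>b. integral\<^sup>L N (g b)) n" for n
    by (simp add: h_cases enum_family_def)
  have h_dom: "(\<Sum>n\<in>K. norm (h n l)) \<le> D l" if K: "finite K" for K l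
  proof -
    define F where "F = from_nat_into S ` (K \<inter> to_nat_on S ` S)"
    have F: "finite F" "F \<subseteq> B"
      using sum_enum_family(2,3)[OF S(1) K] S(2) unfolding F_def by auto
    have "(\<Sum>n\<in>K. norm (h n l)) = (\<Sum>n\<in>K. enum_family S (\<lambda>b. norm (g b l)) n)"
      by (intro sum.cong) (simp_all add: h_def enum_family_def)
    also have "\<dots> = (\<Sum>b\<in>F. norm (g b l))"
      unfolding F_def by (rule sum_enum_family(1)[OF S(1) K])
    also have "\<dots> \<le> D l"
      using F by (rule dom)
    finally show ?thesis .
  qed
  note series = dominated_series_integral[OF h_int h_dom D]
  have pointwise: "infsum (\<lambda>b. g b l) B = (\<Sum>n. h n l)" for l
    by (rule infsumI, rule has_sum_enum_family[OF S]) (use zero series(1)[of l] in \<open>simp_all add: h_def\<close>)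
  show "integrable N (\<lambda>l. infsum (\<lambda>b. g b l) B)"
    using series(2) by (simp add: pointwise)
  have "g b = (\<lambda>_. 0)" if "b \<in> B" "b \<notin> S" for b
    using zero that by auto
  then have "((\<lambda>b. integral\<^sup>L N (g b)) has_sum integral\<^sup>L N (\<lambda>l. \<Sum>n. h n l)) B"
    by (intro has_sum_enum_family[OF S]) (use series(3) in \<open>simp_all add: h_integral\<close>)
  then show "((\<lambda>b. integral\<^sup>L N (g b)) has_sum integral\<^sup>L N (\<lambda>l. infsum (\<lambda>b. g b l) B)) B"
    by (simp add: pointwise)
qed

lemma borel_measurable_cnj [measurable]:
  "f \<in> borel_measurable M \<Longrightarrow> (\<lambda>x. cnj (f x)) \<in> borel_measurable M"
  by (rule borel_measurable_continuous_on[where f=cnj]) (auto intro: continuous_intros)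

lemma L2_borel_measurable: "u \<in> L2 M \<Longrightarrow> u \<in> borel_measurable M"
  by (simp add: L2_def)

lemma L2_square_integrable: "u \<in> L2 M \<Longrightarrow> integrable M (\<lambda>x. (cmod (u x))\<^sup>2)"
  by (simp add: L2_def)

lemma L2_inner_integrable:
  assumes "u \<in> L2 M" "v \<in> L2 M"
  shows "integrable M (\<lambda>x. cnj (u x) * v x)"
proof (rule Bochner_Integration.integrable_bound)
  show "integrable M (\<lambda>x. (cmod (u x))\<^sup>2 + (cmod (v x))\<^sup>2)"
    using assms by (simp add: L2_square_integrable)
  have [measurable]: "u \<in> borel_measurable M" "v \<in> borel_measurable M"
    using assms by (simp_all add: L2_borel_measurable)
  show "(\<lambda>x. cnj (u x) * v x) \<in> borel_measurable M" by measurable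
  have "a * b \<le> a\<^sup>2 + b\<^sup>2" if "0 \<le> a" "0 \<le> b" for a b :: real
    using sum_squares_bound[of a b] mult_nonneg_nonneg[OF that] by linarith
  then show "AE x in M. norm (cnj (u x) * v x) \<le> norm ((cmod (u x))\<^sup>2 + (cmod (v x))\<^sup>2)"
    by (simp add: norm_mult)
qed

lemma L2_linear_combination:
  assumes "u \<in> L2 M" "v \<in> L2 M"
  shows "(\<lambda>x. u x + c * v x) \<in> L2 M"
  unfolding L2_def
proof (intro CollectI conjI)
  have [measurable]: "u \<in> borel_measurable M" "v \<in> borel_measurable M"
    using assms by (simp_all add: L2_borel_measurable)
  show "(\<lambda>x. u x + c * v x) \<in> borel_measurable M" by measurable
  have "(cmod (a + b))\<^sup>2 \<le> 2 * (cmod a)\<^sup>2 + 2 * (cmod b)\<^sup>2" for a b :: complex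
  proof -
    have "(cmod (a + b))\<^sup>2 \<le> (cmod a + cmod b)\<^sup>2"
      by (rule power_mono[OF norm_triangle_ineq]) simp
    also have "\<dots> \<le> 2 * (cmod a)\<^sup>2 + 2 * (cmod b)\<^sup>2"
      using sum_squares_bound[of "cmod a" "cmod b"] by (simp add: power2_sum)
    finally show ?thesis .
  qed
  from this[of "u _" "c * v _"]
  have bound: "AE x in M. norm ((cmod (u x + c * v x))\<^sup>2)
      \<le> norm (2 * (cmod (u x))\<^sup>2 + 2 * (cmod c)\<^sup>2 * (cmod (v x))\<^sup>2)"
    by (simp add: norm_mult power_mult_distrib mult.assoc)
  show "integrable M (\<lambda>x. (cmod (u x + c * v x))\<^sup>2)"
    by (rule Bochner_Integration.integrable_bound[OF _ _ bound])
      (use assms in \<open>auto simp: L2_square_integrable\<close>)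
qed

lemma L2_zero: "(\<lambda>x. 0) \<in> L2 M"
  by (simp add: L2_def)

lemma L2_sum:
  assumes "finite F" "\<And>i. i \<in> F \<Longrightarrow> e i \<in> L2 M"
  shows "(\<lambda>x. \<Sum>i\<in>F. c i * e i x) \<in> L2 M"
  using assms
proof (induction F rule: finite_induct)
  case empty
  then show ?case using L2_zero by simp
next
  case (insert j F)
  then have "(\<lambda>x. (\<Sum>i\<in>F. c i * e i x) + c j * e j x) \<in> L2 M"
    by (intro L2_linear_combination) auto
  then show ?case using insert by (simp add: add.commute)
qed

lemma inner_L2_commute: "inner_L2 M v u = cnj (inner_L2 M u v)"
  unfolding inner_L2_def by (simp add: Bochner_Integration.integral_cnj[symmetric] mult.commute)

lemma inner_L2_self: "inner_L2 M u u = complex_of_real (norm2_L2 M u)"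
proof -
  have "cnj z * z = complex_of_real ((cmod z)\<^sup>2)" for z
    by (metis complex_norm_square mult.commute)
  then show ?thesis
    unfolding inner_L2_def norm2_L2_def by (simp only: integral_complex_of_real)
qed

lemma norm2_L2_nonneg: "0 \<le> norm2_L2 M u"
  unfolding norm2_L2_def by simp

lemma inner_L2_sum_right:
  assumes "finite F" "\<And>i. i \<in> F \<Longrightarrow> e i \<in> L2 M" "u \<in> L2 M"
  shows "inner_L2 M u (\<lambda>x. \<Sum>i\<in>F. c i * e i x) = (\<Sum>i\<in>F. c i * inner_L2 M u (e i))"
proof -
  have "inner_L2 M u (\<lambda>x. \<Sum>i\<in>F. c i * e i x) = (LINT x|M. (\<Sum>i\<in>F. c i * (cnj (u x) * e i x)))"
    unfolding inner_L2_def by (simp add: sum_distrib_left mult.left_commute)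
  also have "\<dots> = (\<Sum>i\<in>F. (LINT x|M. c i * (cnj (u x) * e i x)))"
    by (rule Bochner_Integration.integral_sum) (use assms L2_inner_integrable[of u M] in auto)
  also have "\<dots> = (\<Sum>i\<in>F. c i * inner_L2 M u (e i))"
    unfolding inner_L2_def by simp
  finally show ?thesis .
qed

lemma inner_L2_sum_left:
  assumes "finite F" "\<And>i. i \<in> F \<Longrightarrow> e i \<in> L2 M" "u \<in> L2 M"
  shows "inner_L2 M (\<lambda>x. \<Sum>i\<in>F. c i * e i x) u = (\<Sum>i\<in>F. cnj (c i) * inner_L2 M (e i) u)"
  by (subst (1 2) inner_L2_commute) (simp add: inner_L2_sum_right[OF assms])

lemma inner_L2_diff_self:
  assumes "u \<in> L2 M" "v \<in> L2 M"
  shows "inner_L2 M (\<lambda>x. u x - v x) (\<lambda>x. u x - v x)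
     = inner_L2 M u u - inner_L2 M u v - inner_L2 M v u + inner_L2 M v v"
proof -
  have "inner_L2 M (\<lambda>x. u x - v x) (\<lambda>x. u x - v x)
     = (LINT x|M. (cnj (u x) * u x - cnj (u x) * v x) - (cnj (v x) * u x - cnj (v x) * v x))"
    unfolding inner_L2_def by (simp add: algebra_simps)
  also have "\<dots> = inner_L2 M u u - inner_L2 M u v - inner_L2 M v u + inner_L2 M v v"
    unfolding inner_L2_def using assms L2_inner_integrable[of _ M] by (simp add: integral_diff)
  finally show ?thesis .
qed

text \<open>Orthonormal families; the orthonormal bases of the statement are orthonormal, and all
  that is used below about the basis in which the trace is taken is orthonormality.\<close>

definition orthonormal_L2 :: "'a measure \<Rightarrow> ('a \<Rightarrow> complex) set \<Rightarrow> bool" where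
  "orthonormal_L2 M B \<longleftrightarrow> B \<subseteq> L2 M
     \<and> (\<forall>b\<in>B. \<forall>b'\<in>B. inner_L2 M b b' = (if b = b' then 1 else 0))"

lemma onb_imp_orthonormal_L2: "onb M B \<Longrightarrow> orthonormal_L2 M B"
  by (simp add: onb_def orthonormal_L2_def)

lemma orthonormal_L2_subset: "orthonormal_L2 M B \<Longrightarrow> F \<subseteq> B \<Longrightarrow> orthonormal_L2 M F"
  unfolding orthonormal_L2_def by blast

lemma orthonormal_L2_in_L2: "orthonormal_L2 M B \<Longrightarrow> b \<in> B \<Longrightarrow> b \<in> L2 M"
  unfolding orthonormal_L2_def by blast

lemma inner_L2_orthonormal_combination:
  assumes F: "finite F" "orthonormal_L2 M F" and b: "b \<in> F"
  shows "inner_L2 M b (\<lambda>x. \<Sum>b'\<in>F. c b' * b' x) = c b"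
proof -
  have "inner_L2 M b (\<lambda>x. \<Sum>b'\<in>F. c b' * b' x) = (\<Sum>b'\<in>F. c b' * inner_L2 M b b')"
    using F b by (intro inner_L2_sum_right) (auto intro: orthonormal_L2_in_L2)
  also have "\<dots> = (\<Sum>b'\<in>F. if b' = b then c b else 0)"
    using F(2) b by (intro sum.cong) (auto simp: orthonormal_L2_def)
  finally show ?thesis using F(1) b by simp
qed

text \<open>Bessel's inequality, proved from the norm of u minus its projection onto span F.\<close>

lemma bessel_inequality:
  assumes F: "finite F" "orthonormal_L2 M F" and u: "u \<in> L2 M"
  shows "(\<Sum>b\<in>F. (cmod (inner_L2 M b u))\<^sup>2) \<le> norm2_L2 M u"
proof -
  define c where "c b = inner_L2 M b u" for b
  define w where "w = (\<lambda>x. \<Sum>b\<in>F. c b * b x)"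
  define s where "s = (\<Sum>b\<in>F. cnj (c b) * c b)"
  have in_L2: "\<And>b. b \<in> F \<Longrightarrow> b \<in> L2 M" using F(2) by (rule orthonormal_L2_in_L2)
  have w: "w \<in> L2 M" unfolding w_def using F(1) in_L2 by (rule L2_sum)
  have coeff: "inner_L2 M b w = c b" if "b \<in> F" for b
    unfolding w_def using F that by (rule inner_L2_orthonormal_combination)
  have wu: "inner_L2 M w u = s"
    unfolding w_def s_def using F(1) in_L2 u by (subst inner_L2_sum_left) (auto simp: c_def)
  have ww: "inner_L2 M w w = s"
    unfolding s_def by (subst (1) w_def, subst inner_L2_sum_left[OF F(1) in_L2 w]) (auto simp: coeff)
  have uw: "inner_L2 M u w = s"
    using wu by (subst inner_L2_commute) (simp add: s_def mult.commute)
  have s: "s = complex_of_real (\<Sum>b\<in>F. (cmod (c b))\<^sup>2)"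
    unfolding s_def of_real_sum by (intro sum.cong refl) (metis complex_norm_square mult.commute)
  have "complex_of_real (norm2_L2 M (\<lambda>x. u x - w x)) = inner_L2 M (\<lambda>x. u x - w x) (\<lambda>x. u x - w x)"
    by (simp add: inner_L2_self)
  also have "\<dots> = complex_of_real (norm2_L2 M u - (\<Sum>b\<in>F. (cmod (c b))\<^sup>2))"
    unfolding inner_L2_diff_self[OF u w] uw wu ww s by (simp add: inner_L2_self)
  finally have "norm2_L2 M (\<lambda>x. u x - w x) = norm2_L2 M u - (\<Sum>b\<in>F. (cmod (c b))\<^sup>2)"
    using of_real_eq_iff by blast
  with norm2_L2_nonneg[of M "\<lambda>x. u x - w x"] show ?thesis unfolding c_def by linarith
qed

lemma bessel_countable_support:
  assumes B: "orthonormal_L2 M B" and u: "u \<in> L2 M"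
  shows "countable {b\<in>B. inner_L2 M b u \<noteq> 0}"
proof -
  have "Infinite_Sum.abs_summable_on (\<lambda>b. (cmod (inner_L2 M b u))\<^sup>2) B"
    unfolding abs_summable_iff_bdd_above
  proof (rule bdd_aboveI2)
    fix F assume "F \<in> {F. F \<subseteq> B \<and> finite F}"
    then have "finite F" "orthonormal_L2 M F" using orthonormal_L2_subset[OF B] by auto
    from bessel_inequality[OF this u]
    show "(\<Sum>b\<in>F. norm ((cmod (inner_L2 M b u))\<^sup>2)) \<le> norm2_L2 M u" by simp
  qed
  from abs_summable_countable[OF this] show ?thesis by simp
qed

lemma bounded_op_L2: "bounded_op M T \<Longrightarrow> u \<in> L2 M \<Longrightarrow> T u \<in> L2 M"
  unfolding bounded_op_def by blast

lemma bounded_op_quadratic_form: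
  assumes T: "bounded_op M T" and u: "u \<in> L2 M" and v: "v \<in> L2 M"
  shows "inner_L2 M (\<lambda>y. u y + c * v y) (T (\<lambda>y. u y + c * v y))
    = inner_L2 M u (T u) + c * inner_L2 M u (T v) + cnj c * inner_L2 M v (T u)
      + (cnj c * c) * inner_L2 M v (T v)"
proof -
  have linear: "AE x in M. T (\<lambda>y. u y + c * v y) x = T u x + c * T v x"
    using T u v unfolding bounded_op_def by blast
  have Tu: "T u \<in> L2 M" and Tv: "T v \<in> L2 M"
    using T u v by (simp_all add: bounded_op_L2)
  have [measurable]: "u \<in> borel_measurable M" "v \<in> borel_measurable M" "T u \<in> borel_measurable M"
    "T v \<in> borel_measurable M" "T (\<lambda>y. u y + c * v y) \<in> borel_measurable M"
    using T u v Tu Tv L2_linear_combination[OF u v]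
    by (auto simp: L2_borel_measurable bounded_op_L2)
  have "inner_L2 M (\<lambda>y. u y + c * v y) (T (\<lambda>y. u y + c * v y))
      = (LINT x|M. (cnj (u x) * T u x + c * (cnj (u x) * T v x))
          + (cnj c * (cnj (v x) * T u x) + (cnj c * c) * (cnj (v x) * T v x)))"
    unfolding inner_L2_def
    by (rule integral_cong_AE) (use linear in \<open>auto elim!: AE_mp simp: algebra_simps\<close>)
  also have "\<dots> = inner_L2 M u (T u) + c * inner_L2 M u (T v) + cnj c * inner_L2 M v (T u)
      + (cnj c * c) * inner_L2 M v (T v)"
    unfolding inner_L2_def
    using L2_inner_integrable[OF u Tu] L2_inner_integrable[OF u Tv]
      L2_inner_integrable[OF v Tu] L2_inner_integrable[OF v Tv]
    by (simp add: add.assoc)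
  finally show ?thesis .
qed

text \<open>A positive operator is Hermitian: polarization with the coefficients 1 and i of the real
  quadratic form.\<close>

lemma positive_op_hermitian:
  assumes T: "bounded_op M T" "positive_op M T" and u: "u \<in> L2 M" and v: "v \<in> L2 M"
  shows "inner_L2 M u (T v) = cnj (inner_L2 M v (T u))"
proof -
  define a where "a = inner_L2 M u (T v)"
  define b where "b = inner_L2 M v (T u)"
  have real: "Im (inner_L2 M w (T w)) = 0" if "w \<in> L2 M" for w
    using T(2) that unfolding positive_op_def by blast
  have "Im (inner_L2 M (\<lambda>y. u y + c * v y) (T (\<lambda>y. u y + c * v y))) = 0" for c
    using real L2_linear_combination[OF u v] by blast
  from this[of 1] this[of \<i>] have "Im a + Im b = 0" "Re a - Re b = 0"
    unfolding bounded_op_quadratic_form[OF T(1) u v] using real[OF u] real[OF v]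
    by (simp_all add: a_def b_def)
  then show ?thesis unfolding a_def[symmetric] b_def[symmetric]
    by (intro complex_eqI) auto
qed

lemma complex_indicator_mult: "(indicator A x :: complex) * z = indicator A x *\<^sub>R z"
  by (simp split: split_indicator)

lemma cnj_indicator [simp]: "cnj (indicator A x :: complex) = indicator A x"
  by (simp split: split_indicator)

lemma mu_op_eq: "mu_op M A b = (\<lambda>y. inner_L2 M (indicator A) b * indicator A y)"
  unfolding mu_op_def inner_L2_def set_lebesgue_integral_def
  by (simp add: complex_indicator_mult)

lemma norm2_indicator: "(\<lambda>x. (cmod (indicator A x :: complex))\<^sup>2) = indicator A"
  by (auto simp: fun_eq_iff split: split_indicator)

lemma real_L2: "f \<in> borel_measurable M \<Longrightarrow> integrable M (\<lambda>x. (f x)\<^sup>2) \<Longrightarrow> (\<lambda>x. complex_of_real (f x)) \<in> L2 M"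
  by (simp add: L2_def)

lemma L2_times_real_integrable:
  assumes f: "f \<in> borel_measurable M" "integrable M (\<lambda>x. (f x)\<^sup>2)" "\<forall>x\<in>space M. 0 \<le> f x"
    and b: "b \<in> L2 M"
  shows "integrable M (\<lambda>x. cmod (b x) * f x)"
proof -
  have "integrable M (\<lambda>x. norm (cnj (b x) * complex_of_real (f x)))"
    using L2_inner_integrable[OF b real_L2[OF f(1,2)]] by (rule integrable_norm)
  then show ?thesis
    by (rule Bochner_Integration.integrable_cong[THEN iffD1, rotated -1])
      (use f(3) in \<open>auto simp: norm_mult\<close>)
qed

lemma (in pair_sigma_finite) integrable_product_of_factors:
  fixes g :: "'a \<Rightarrow> 'c::{real_normed_field, banach, second_countable_topology}"
  assumes g: "integrable M1 g" and h: "integrable M2 h"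
  shows "integrable (M1 \<Otimes>\<^sub>M M2) (\<lambda>p. g (fst p) * h (snd p))"
    and "(\<integral>p. g (fst p) * h (snd p) \<partial>(M1 \<Otimes>\<^sub>M M2)) = integral\<^sup>L M1 g * integral\<^sup>L M2 h"
proof -
  have [measurable]: "g \<in> borel_measurable M1" "h \<in> borel_measurable M2"
    using g h by auto
  show int: "integrable (M1 \<Otimes>\<^sub>M M2) (\<lambda>p. g (fst p) * h (snd p))"
  proof (rule Fubini_integrable)
    show "(\<lambda>p. g (fst p) * h (snd p)) \<in> borel_measurable (M1 \<Otimes>\<^sub>M M2)" by measurable
    show "integrable M1 (\<lambda>x. \<integral>y. norm (g (fst (x, y)) * h (snd (x, y))) \<partial>M2)"
      using g h by (simp add: norm_mult)
    show "AE x in M1. integrable M2 (\<lambda>y. g (fst (x, y)) * h (snd (x, y)))"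
      using h by simp
  qed
  show "(\<integral>p. g (fst p) * h (snd p) \<partial>(M1 \<Otimes>\<^sub>M M2)) = integral\<^sup>L M1 g * integral\<^sup>L M2 h"
    using integral_fst'[OF int] by simp
qed

context finite_measure
begin

lemma L2_integrable:
  assumes u: "u \<in> L2 M"
  shows "integrable M u"
proof -
  have [measurable]: "u \<in> borel_measurable M" using u by (rule L2_borel_measurable)
  have "integrable M (\<lambda>x. cmod (u x))"
    by (rule square_integrable_imp_integrable) (use u L2_square_integrable in auto)
  then show ?thesis by (simp add: integrable_norm_iff)
qed

lemma indicator_L2: "A \<in> sets M \<Longrightarrow> (indicator A :: 'a \<Rightarrow> complex) \<in> L2 M"
  unfolding L2_def mem_Collect_eq norm2_indicator
  by (intro conjI borel_measurable_indicator integrable_real_indicator)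
    (simp_all add: less_top[symmetric])

lemma norm2_L2_indicator: "A \<in> sets M \<Longrightarrow> norm2_L2 M (indicator A) = measure M A"
  unfolding norm2_L2_def norm2_indicator by (simp add: Int_absorb1 sets.sets_into_space)

end

text \<open>The quantization as a superposition of the rank-one operators mu(A(l)). The kernel below is
  b x * conj (w y) times the indicator of 0 <= l < min (f x) (f y); integrating out l yields
  the kernel of f^, integrating out (x, y) yields <chi_A(l), b> <w, chi_A(l)>.\<close>

abbreviation superlevel :: "'a measure \<Rightarrow> ('a \<Rightarrow> real) \<Rightarrow> real \<Rightarrow> 'a set" where
  "superlevel M f l \<equiv> {x\<in>space M. l < f x}"

definition quant_kernel ::
  "('a \<Rightarrow> real) \<Rightarrow> ('a \<Rightarrow> complex) \<Rightarrow> ('a \<Rightarrow> complex) \<Rightarrow> ('a \<times> 'a) \<times> real \<Rightarrow> complex" where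
  "quant_kernel f b w z = (if 0 \<le> snd z \<and> snd z < f (fst (fst z)) \<and> snd z < f (snd (fst z))
     then b (fst (fst z)) * cnj (w (snd (fst z))) else 0)"

lemma quant_kernel_section:
  "(\<lambda>l. quant_kernel f b w ((x, y), l)) = (\<lambda>l. indicator {0..<min (f x) (f y)} l *\<^sub>R (b x * cnj (w y)))"
  unfolding quant_kernel_def by (auto simp: fun_eq_iff split: split_indicator)

lemma emeasure_lborel_Ico_finite: "emeasure lborel {a..<c::real} < \<top>"
  by (cases "a \<le> c") auto

lemma quant_kernel_section_integrable: "integrable lborel (\<lambda>l. quant_kernel f b w ((x, y), l))"
  unfolding quant_kernel_section
  by (intro integrable_scaleR_left integrable_real_indicator) (auto simp: emeasure_lborel_Ico_finite)

lemma quant_kernel_section_integral: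
  "0 \<le> f x \<Longrightarrow> 0 \<le> f y \<Longrightarrow>
    (\<integral>l. quant_kernel f b w ((x, y), l) \<partial>lborel) = min (f x) (f y) *\<^sub>R (b x * cnj (w y))"
  unfolding quant_kernel_section by simp

context finite_measure
begin

lemma quant_pointwise_bound:
  assumes f: "f \<in> borel_measurable M" "\<forall>x\<in>space M. 0 \<le> f x"
    and b: "b \<in> L2 M" and y: "y \<in> space M"
  shows "cmod (quant M f b y) \<le> f y * (\<integral>x. cmod (b x) \<partial>M)"
proof -
  have [measurable]: "f \<in> borel_measurable M" "b \<in> borel_measurable M"
    using f b by (simp_all add: L2_borel_measurable)
  have int_b: "integrable M (\<lambda>x. f y * cmod (b x))"
    using L2_integrable[OF b] by simp
  have le: "norm (complex_of_real (min (f x) (f y)) * b x) \<le> f y * cmod (b x)" if "x \<in> space M" for x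
    using f(2) y that by (auto simp: norm_mult intro!: mult_right_mono)
  have int: "integrable M (\<lambda>x. complex_of_real (min (f x) (f y)) * b x)"
  proof (rule Bochner_Integration.integrable_bound[OF int_b])
    show "(\<lambda>x. complex_of_real (min (f x) (f y)) * b x) \<in> borel_measurable M" by measurable
    show "AE x in M. norm (complex_of_real (min (f x) (f y)) * b x) \<le> norm (f y * cmod (b x))"
      using le by (auto intro!: AE_I2 order_trans[OF _ abs_ge_self])
  qed
  have "cmod (quant M f b y) \<le> (\<integral>x. norm (complex_of_real (min (f x) (f y)) * b x) \<partial>M)"
    unfolding quant_def by (rule integral_norm_bound)
  also have "\<dots> \<le> (\<integral>x. f y * cmod (b x) \<partial>M)"
    using int int_b le by (intro Bochner_Integration.integral_mono) auto
  finally show ?thesis by simp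
qed

lemma quant_L2:
  assumes f: "f \<in> borel_measurable M" "integrable M (\<lambda>x. (f x)\<^sup>2)" "\<forall>x\<in>space M. 0 \<le> f x"
    and b: "b \<in> L2 M"
  shows "quant M f b \<in> L2 M"
proof -
  have [measurable]: "f \<in> borel_measurable M" "b \<in> borel_measurable M"
    using f b by (simp_all add: L2_borel_measurable)
  have [measurable]: "quant M f b \<in> borel_measurable M"
    unfolding quant_def by measurable
  define c where "c = (\<integral>x. cmod (b x) \<partial>M)"
  have "(cmod (quant M f b y))\<^sup>2 \<le> (f y)\<^sup>2 * c\<^sup>2" if "y \<in> space M" for y
    using power_mono[OF quant_pointwise_bound[OF f(1,3) b that]]
    by (simp add: c_def power_mult_distrib)
  then have "AE x in M. norm ((cmod (quant M f b x))\<^sup>2) \<le> norm ((f x)\<^sup>2 * c\<^sup>2)"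
    by (auto intro!: AE_I2)
  then have "integrable M (\<lambda>x. (cmod (quant M f b x))\<^sup>2)"
    by (rule Bochner_Integration.integrable_bound[rotated -1]) (use f(2) in simp_all)
  then show ?thesis unfolding L2_def by simp
qed

lemma quant_kernel_bound_integrable:
  assumes f: "f \<in> borel_measurable M" "integrable M (\<lambda>x. (f x)\<^sup>2)" "\<forall>x\<in>space M. 0 \<le> f x"
    and b: "b \<in> L2 M" and w: "w \<in> L2 M"
  shows "integrable (M \<Otimes>\<^sub>M M) (\<lambda>p. min (f (fst p)) (f (snd p)) * (cmod (b (fst p)) * cmod (w (snd p))))"
proof (rule Bochner_Integration.integrable_bound)
  interpret MM: pair_sigma_finite M M ..
  have [measurable]: "f \<in> borel_measurable M" "b \<in> borel_measurable M" "w \<in> borel_measurable M"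
    using f b w by (simp_all add: L2_borel_measurable)
  show "integrable (M \<Otimes>\<^sub>M M) (\<lambda>p. (cmod (b (fst p)) * f (fst p)) * cmod (w (snd p)))"
    using L2_times_real_integrable[OF f b] L2_integrable[OF w]
    by (intro MM.integrable_product_of_factors(1)) auto
  show "(\<lambda>p. min (f (fst p)) (f (snd p)) * (cmod (b (fst p)) * cmod (w (snd p))))
      \<in> borel_measurable (M \<Otimes>\<^sub>M M)"
    by measurable
  show "AE p in M \<Otimes>\<^sub>M M. norm (min (f (fst p)) (f (snd p)) * (cmod (b (fst p)) * cmod (w (snd p))))
      \<le> norm ((cmod (b (fst p)) * f (fst p)) * cmod (w (snd p)))"
  proof (rule AE_I2)
    fix p assume "p \<in> space (M \<Otimes>\<^sub>M M)"
    then have "0 \<le> f (fst p)" "0 \<le> f (snd p)" using f(3) by (auto simp: space_pair_measure)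
    moreover have "min (f (fst p)) (f (snd p)) * (cmod (b (fst p)) * cmod (w (snd p)))
        \<le> f (fst p) * (cmod (b (fst p)) * cmod (w (snd p)))"
      by (rule mult_right_mono) simp_all
    ultimately show "norm (min (f (fst p)) (f (snd p)) * (cmod (b (fst p)) * cmod (w (snd p))))
        \<le> norm ((cmod (b (fst p)) * f (fst p)) * cmod (w (snd p)))"
      by (simp add: abs_mult mult_ac)
  qed
qed

lemma quant_kernel_integrable:
  assumes f: "f \<in> borel_measurable M" "integrable M (\<lambda>x. (f x)\<^sup>2)" "\<forall>x\<in>space M. 0 \<le> f x"
    and b: "b \<in> L2 M" and w: "w \<in> L2 M"
  shows "integrable ((M \<Otimes>\<^sub>M M) \<Otimes>\<^sub>M lborel) (quant_kernel f b w)"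
proof (rule pair_sigma_finite.Fubini_integrable)
  show "pair_sigma_finite (M \<Otimes>\<^sub>M M) lborel"
    by (intro pair_sigma_finite.intro sigma_finite_pair_measure sigma_finite_lborel) unfold_locales
  have [measurable]: "f \<in> borel_measurable M" "b \<in> borel_measurable M" "w \<in> borel_measurable M"
    using f b w by (simp_all add: L2_borel_measurable)
  show "quant_kernel f b w \<in> borel_measurable ((M \<Otimes>\<^sub>M M) \<Otimes>\<^sub>M lborel)"
    unfolding quant_kernel_def by measurable
  show "AE p in M \<Otimes>\<^sub>M M. integrable lborel (\<lambda>l. quant_kernel f b w (p, l))"
    using quant_kernel_section_integrable[of f b w] by (intro AE_I2) (auto simp: split_paired_all)
  have "(\<integral>l. norm (quant_kernel f b w (p, l)) \<partial>lborel)
      = min (f (fst p)) (f (snd p)) * (cmod (b (fst p)) * cmod (w (snd p)))"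
    if "p \<in> space (M \<Otimes>\<^sub>M M)" for p
  proof -
    have "fst p \<in> space M" "snd p \<in> space M" using that by (auto simp: space_pair_measure)
    moreover have "(\<lambda>l. norm (quant_kernel f b w (p, l)))
        = (\<lambda>l. indicator {0..<min (f (fst p)) (f (snd p))} l * (cmod (b (fst p)) * cmod (w (snd p))))"
      by (auto simp: quant_kernel_def fun_eq_iff norm_mult split: split_indicator)
    ultimately show ?thesis using f(3) by simp
  qed
  then show "integrable (M \<Otimes>\<^sub>M M) (\<lambda>p. \<integral>l. norm (quant_kernel f b w (p, l)) \<partial>lborel)"
    using quant_kernel_bound_integrable[OF f b w]
    by (rule Bochner_Integration.integrable_cong[THEN iffD2, OF refl])
qed

lemma quant_kernel_integral_pair:
  assumes f: "f \<in> borel_measurable M" and b: "b \<in> L2 M" and w: "w \<in> L2 M"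
  shows "(\<integral>p. quant_kernel f b w (p, l) \<partial>(M \<Otimes>\<^sub>M M))
    = indicator {0..} l *\<^sub>R (inner_L2 M (indicator (superlevel M f l)) b
        * inner_L2 M w (indicator (superlevel M f l)))"
proof (cases "0 \<le> l")
  case True
  interpret MM: pair_sigma_finite M M ..
  define A where "A = superlevel M f l"
  have A: "A \<in> sets M" unfolding A_def using f by measurable
  have "(\<integral>p. quant_kernel f b w (p, l) \<partial>(M \<Otimes>\<^sub>M M))
      = (\<integral>p. (indicator A (fst p) * b (fst p)) * (indicator A (snd p) * cnj (w (snd p))) \<partial>(M \<Otimes>\<^sub>M M))"
    by (rule Bochner_Integration.integral_cong)
      (auto simp: quant_kernel_def A_def space_pair_measure True split: split_indicator)
  also have "\<dots> = (\<integral>x. indicator A x * b x \<partial>M) * (\<integral>y. indicator A y * cnj (w y) \<partial>M)"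
    using A L2_integrable[OF b] L2_integrable[OF w]
    by (intro MM.integrable_product_of_factors(2))
      (auto simp: complex_indicator_mult intro!: integrable_mult_indicator)
  finally show ?thesis
    using True unfolding inner_L2_def A_def by (simp add: mult.commute[of "cnj (w _)"])
qed (simp add: quant_kernel_def)

lemma quant_quadratic_form:
  assumes f: "f \<in> borel_measurable M" "integrable M (\<lambda>x. (f x)\<^sup>2)" "\<forall>x\<in>space M. 0 \<le> f x"
    and b: "b \<in> L2 M" and w: "w \<in> L2 M"
  defines "\<phi> \<equiv> \<lambda>l. inner_L2 M (indicator (superlevel M f l)) b * inner_L2 M w (indicator (superlevel M f l))"
  shows "set_integrable lborel {0..} \<phi>"
    and "inner_L2 M w (quant M f b) = (LINT l:{0..}|lborel. \<phi> l)"
proof -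
  interpret MM: pair_sigma_finite M M ..
  interpret MML: pair_sigma_finite "M \<Otimes>\<^sub>M M" lborel ..
  define K where "K = quant_kernel f b w"
  have K: "integrable ((M \<Otimes>\<^sub>M M) \<Otimes>\<^sub>M lborel) (\<lambda>(p, l). K (p, l))"
    using quant_kernel_integrable[OF f b w] by (simp add: K_def)
  have pair_section: "(\<integral>p. K (p, l) \<partial>(M \<Otimes>\<^sub>M M)) = indicator {0..} l *\<^sub>R \<phi> l" for l
    unfolding K_def \<phi>_def by (rule quant_kernel_integral_pair[OF f(1) b w])
  show "set_integrable lborel {0..} \<phi>"
    using MML.integrable_snd[OF K] unfolding set_integrable_def pair_section .
  have K_pair: "integrable (M \<Otimes>\<^sub>M M) (\<lambda>(x, y). \<integral>l. K ((x, y), l) \<partial>lborel)"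
    using MML.integrable_fst[OF K] by (simp add: split_beta')
  have "(LINT l:{0..}|lborel. \<phi> l) = integral\<^sup>L ((M \<Otimes>\<^sub>M M) \<Otimes>\<^sub>M lborel) (\<lambda>(p, l). K (p, l))"
    using MML.integral_snd[OF K] unfolding set_lebesgue_integral_def pair_section by simp
  also have "\<dots> = (\<integral>p. (\<integral>l. K (p, l) \<partial>lborel) \<partial>(M \<Otimes>\<^sub>M M))"
    using MML.integral_fst[OF K] by simp
  also have "\<dots> = (\<integral>y. (\<integral>x. (\<integral>l. K ((x, y), l) \<partial>lborel) \<partial>M) \<partial>M)"
    using MM.integral_snd[OF K_pair] by (simp add: split_beta')
  also have "\<dots> = (LINT y|M. cnj (w y) * quant M f b y)"
  proof (rule Bochner_Integration.integral_cong[OF refl])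
    fix y assume y: "y \<in> space M"
    have "(\<integral>x. (\<integral>l. K ((x, y), l) \<partial>lborel) \<partial>M)
        = (\<integral>x. (complex_of_real (min (f x) (f y)) * b x) * cnj (w y) \<partial>M)"
      using f(3) y unfolding K_def
      by (intro Bochner_Integration.integral_cong)
        (simp_all add: quant_kernel_section_integral scaleR_conv_of_real mult.assoc)
    then show "(\<integral>x. (\<integral>l. K ((x, y), l) \<partial>lborel) \<partial>M) = cnj (w y) * quant M f b y"
      unfolding quant_def by (simp add: mult.commute)
  qed
  finally show "inner_L2 M w (quant M f b) = (LINT l:{0..}|lborel. \<phi> l)"
    unfolding inner_L2_def by simp
qed

end

text \<open>Superlevel sets: right-continuity of the coefficients in the level, the resulting countable
  support, and integrability of the tail function l |-> nu(A(l)).\<close>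

lemma rational_sequence_from_above:
  fixes l :: real
  obtains q where "\<And>n. q n \<in> \<rat>" "\<And>n. l < q n" "q \<longlonglongrightarrow> l"
proof -
  have "\<forall>n. \<exists>r. r \<in> \<rat> \<and> l < r \<and> r < l + 1 / real (Suc n)"
    using Rats_dense_in_real[of l "l + 1 / real (Suc _)"] by (simp add: Bex_def)
  then obtain q where q: "\<And>n. q n \<in> \<rat>" "\<And>n. l < q n" "\<And>n. q n < l + 1 / real (Suc n)"
    by (metis choice)
  have "(\<lambda>n. l + 1 / real (Suc n)) \<longlonglongrightarrow> l + 0"
    by (intro tendsto_add tendsto_const LIMSEQ_inverse_real_of_nat[unfolded inverse_eq_divide])
  moreover have "\<forall>\<^sub>F n in sequentially. l \<le> q n" "\<forall>\<^sub>F n in sequentially. q n \<le> l + 1 / real (Suc n)"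
    using q(2,3) by (auto intro!: always_eventually less_imp_le)
  ultimately have "q \<longlonglongrightarrow> l"
    using tendsto_sandwich[OF _ _ tendsto_const] by fastforce
  with q(1,2) show ?thesis by (rule that)
qed

context finite_measure
begin

text \<open>By dominated convergence, since A(q) increases to A(l) as q decreases to l.\<close>

lemma inner_superlevel_right_continuous:
  assumes f: "f \<in> borel_measurable M" and b: "b \<in> L2 M"
    and q: "\<And>n. l < q n" "q \<longlonglongrightarrow> l"
  shows "(\<lambda>n. inner_L2 M (indicator (superlevel M f (q n))) b)
    \<longlonglongrightarrow> inner_L2 M (indicator (superlevel M f l)) b"
  unfolding inner_L2_def cnj_indicator
proof (rule integral_dominated_convergence[where w="\<lambda>x. cmod (b x)"])
  have [measurable]: "f \<in> borel_measurable M" "b \<in> borel_measurable M"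
    using f b by (simp_all add: L2_borel_measurable)
  show "(\<lambda>x. indicator (superlevel M f l) x * b x) \<in> borel_measurable M" by measurable
  show "(\<lambda>x. indicator (superlevel M f (q n)) x * b x) \<in> borel_measurable M" for n by measurable
  show "integrable M (\<lambda>x. cmod (b x))" using L2_integrable[OF b] by simp
  show "AE x in M. norm (indicator (superlevel M f (q n)) x * b x) \<le> cmod (b x)" for n
    by (auto simp: norm_mult split: split_indicator)
  show "AE x in M. (\<lambda>n. indicator (superlevel M f (q n)) x * b x)
      \<longlonglongrightarrow> indicator (superlevel M f l) x * b x"
  proof (rule AE_I2)
    fix x assume x: "x \<in> space M"
    show "(\<lambda>n. indicator (superlevel M f (q n)) x * b x) \<longlonglongrightarrow> indicator (superlevel M f l) x * b x"
    proof (cases "l < f x")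
      case True
      then have "eventually (\<lambda>n. q n < f x) sequentially"
        using order_tendstoD(2)[OF q(2)] by blast
      then show ?thesis
        by (rule tendsto_eventually[OF eventually_mono]) (simp add: x True)
    next
      case False
      then have "\<not> q n < f x" for n using q(1)[of n] by linarith
      then show ?thesis using False by simp
    qed
  qed
qed

lemma inner_superlevel_zero_from_rationals:
  assumes f: "f \<in> borel_measurable M" and b: "b \<in> L2 M"
    and zero: "\<And>q. q \<in> \<rat> \<Longrightarrow> inner_L2 M (indicator (superlevel M f q)) b = 0"
  shows "inner_L2 M (indicator (superlevel M f l)) b = 0"
proof -
  obtain q where q: "\<And>n. q n \<in> \<rat>" "\<And>n. l < q n" "q \<longlonglongrightarrow> l"
    using rational_sequence_from_above[of l] by blast
  have "(\<lambda>n. 0) \<longlonglongrightarrow> inner_L2 M (indicator (superlevel M f l)) b"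
    using inner_superlevel_right_continuous[OF f b q(2,3)] by (simp add: zero q(1))
  then show ?thesis by (simp add: LIMSEQ_const_iff)
qed

lemma countable_superlevel_support:
  assumes B: "orthonormal_L2 M B" and f: "f \<in> borel_measurable M"
  obtains S where "countable S" "S \<subseteq> B"
    "\<And>b l. b \<in> B \<Longrightarrow> b \<notin> S \<Longrightarrow> inner_L2 M (indicator (superlevel M f l)) b = 0"
proof
  define S where "S = (\<Union>q\<in>\<rat>. {b\<in>B. inner_L2 M b (indicator (superlevel M f q)) \<noteq> 0})"
  have "superlevel M f q \<in> sets M" for q using f by measurable
  then have "countable {b\<in>B. inner_L2 M b (indicator (superlevel M f q)) \<noteq> 0}" for q
    using B by (intro bessel_countable_support indicator_L2)
  then show "countable S"
    unfolding S_def by (rule countable_UN[OF countable_rat])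
  show "S \<subseteq> B" unfolding S_def by auto
  fix b l assume b: "b \<in> B" "b \<notin> S"
  have "inner_L2 M b (indicator (superlevel M f q)) = 0" if "q \<in> \<rat>" for q
    using b that unfolding S_def by blast
  then have "inner_L2 M (indicator (superlevel M f q)) b = 0" if "q \<in> \<rat>" for q
    using that inner_L2_commute[of M "indicator (superlevel M f q)" b] by simp
  then show "inner_L2 M (indicator (superlevel M f l)) b = 0"
    by (rule inner_superlevel_zero_from_rationals[OF f orthonormal_L2_in_L2[OF B b(1)]])
qed

text \<open>Layer-cake integrability: by Fubini for the indicator of {0 <= l < f x}, the tail function
  l |-> nu(A(l)) is integrable over l >= 0 when f is integrable.\<close>

lemma superlevel_measure_integrable:
  assumes f: "f \<in> borel_measurable M" "integrable M f" "\<forall>x\<in>space M. 0 \<le> f x"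
  shows "set_integrable lborel {0..} (\<lambda>l. measure M (superlevel M f l))"
proof -
  interpret Mlb: pair_sigma_finite M lborel ..
  have [measurable]: "f \<in> borel_measurable M" by (rule f(1))
  define F where "F x l = (if 0 \<le> l \<and> l < f x then 1 else 0 :: real)" for x l
  have F_section: "(\<lambda>l. F x l) = indicator {0..<f x}" for x
    by (auto simp: F_def fun_eq_iff split: split_indicator)
  have F: "integrable (M \<Otimes>\<^sub>M lborel) (\<lambda>(x, l). F x l)"
  proof (rule Mlb.Fubini_integrable)
    show "(\<lambda>(x, l). F x l) \<in> borel_measurable (M \<Otimes>\<^sub>M lborel)"
      unfolding F_def by measurable
    show "integrable M (\<lambda>x. \<integral>l. norm (case (x, l) of (x, l) \<Rightarrow> F x l) \<partial>lborel)"
      using f(2) by (rule Bochner_Integration.integrable_cong[THEN iffD1, OF refl, rotated])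
        (simp add: F_section f(3))
    show "AE x in M. integrable lborel (\<lambda>l. case (x, l) of (x, l) \<Rightarrow> F x l)"
      by (simp add: F_section emeasure_lborel_Ico_finite)
  qed
  have "(\<integral>x. F x l \<partial>M) = indicator {0..} l *\<^sub>R measure M (superlevel M f l)" for l
  proof (cases "0 \<le> l")
    case True
    have "(\<integral>x. F x l \<partial>M) = (\<integral>x. indicator (superlevel M f l) x \<partial>M)"
      by (rule Bochner_Integration.integral_cong) (auto simp: F_def True split: split_indicator)
    then show ?thesis using True by (simp add: Int_absorb2)
  qed (simp add: F_def)
  then show ?thesis
    using Mlb.integrable_snd[OF F] unfolding set_integrable_def by simp
qed

end

definition tail_coeff ::
  "'a measure \<Rightarrow> (('a \<Rightarrow> complex) \<Rightarrow> ('a \<Rightarrow> complex)) \<Rightarrow> ('a \<Rightarrow> real) \<Rightarrow> ('a \<Rightarrow> complex) \<Rightarrow> real \<Rightarrow> complex"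
  where "tail_coeff M T f b l = inner_L2 M (indicator (superlevel M f l)) b
           * inner_L2 M (T b) (indicator (superlevel M f l))"

context finite_measure
begin

text \<open>Diagonal entries of T mu(A), using mu(A) b = <chi_A, b> chi_A and Hermiticity of T.\<close>

lemma diag_mu_op:
  assumes T: "bounded_op M T" "positive_op M T" and A: "A \<in> sets M" and b: "b \<in> L2 M"
  shows "inner_L2 M b (T (mu_op M A b)) = inner_L2 M (indicator A) b * inner_L2 M (T b) (indicator A)"
proof -
  define c where "c = inner_L2 M (indicator A) b"
  have mu: "mu_op M A b = (\<lambda>y. c * indicator A y)"
    unfolding mu_op_eq c_def ..
  have "mu_op M A b \<in> L2 M"
    using L2_linear_combination[OF L2_zero indicator_L2[OF A], of c] by (simp add: mu)
  then have "inner_L2 M b (T (mu_op M A b)) = cnj (inner_L2 M (mu_op M A b) (T b))"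
    by (rule positive_op_hermitian[OF T b])
  also have "inner_L2 M (mu_op M A b) (T b) = cnj c * inner_L2 M (indicator A) (T b)"
    unfolding mu inner_L2_def by (simp add: mult.assoc)
  finally show ?thesis
    by (simp add: c_def inner_L2_commute[of M "T b"])
qed

text \<open>Diagonal entries of T f^, from the Fubini representation with w = T b.\<close>

lemma diag_quant:
  assumes T: "bounded_op M T" "positive_op M T"
    and f: "f \<in> borel_measurable M" "integrable M (\<lambda>x. (f x)\<^sup>2)" "\<forall>x\<in>space M. 0 \<le> f x"
    and b: "b \<in> L2 M"
  shows "set_integrable lborel {0..} (tail_coeff M T f b)"
    and "inner_L2 M b (T (quant M f b)) = (LINT l:{0..}|lborel. tail_coeff M T f b l)"
proof -
  have Tb: "T b \<in> L2 M" using T(1) b by (rule bounded_op_L2)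
  show "set_integrable lborel {0..} (tail_coeff M T f b)"
    using quant_quadratic_form(1)[OF f b Tb] unfolding tail_coeff_def[abs_def] .
  have "inner_L2 M b (T (quant M f b)) = cnj (inner_L2 M (quant M f b) (T b))"
    using T b quant_L2[OF f b] by (rule positive_op_hermitian)
  also have "\<dots> = inner_L2 M (T b) (quant M f b)"
    by (simp add: inner_L2_commute[of M "T b"])
  also have "\<dots> = (LINT l:{0..}|lborel. tail_coeff M T f b l)"
    using quant_quadratic_form(2)[OF f b Tb] unfolding tail_coeff_def .
  finally show "inner_L2 M b (T (quant M f b)) = (LINT l:{0..}|lborel. tail_coeff M T f b l)" .
qed

end

text \<open>Cauchy-Schwarz and Bessel bound the finite partial sums of the products of coefficients
  of u and of T u by (||u||^2 + ||T u||^2) / 2.\<close>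

lemma diag_coefficient_sum_bound:
  assumes T: "bounded_op M T" "positive_op M T"
    and F: "finite F" "orthonormal_L2 M F" and u: "u \<in> L2 M"
  shows "(\<Sum>b\<in>F. cmod (inner_L2 M u b * inner_L2 M (T b) u))
    \<le> (norm2_L2 M u + norm2_L2 M (T u)) / 2"
proof -
  have Tu: "T u \<in> L2 M" using T(1) u by (rule bounded_op_L2)
  have single_term: "cmod (inner_L2 M u b * inner_L2 M (T b) u)
      \<le> ((cmod (inner_L2 M b u))\<^sup>2 + (cmod (inner_L2 M b (T u)))\<^sup>2) / 2" if "b \<in> F" for b
  proof -
    have "inner_L2 M (T b) u = inner_L2 M b (T u)"
      using positive_op_hermitian[OF T u orthonormal_L2_in_L2[OF F(2) that]]
      by (simp add: inner_L2_commute[of M "T b"])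
    then show ?thesis
      using sum_squares_bound[of "cmod (inner_L2 M b u)" "cmod (inner_L2 M b (T u))"]
      by (simp add: norm_mult inner_L2_commute[of M u b])
  qed
  have "(\<Sum>b\<in>F. cmod (inner_L2 M u b * inner_L2 M (T b) u))
      \<le> (\<Sum>b\<in>F. ((cmod (inner_L2 M b u))\<^sup>2 + (cmod (inner_L2 M b (T u)))\<^sup>2) / 2)"
    by (rule sum_mono) (rule single_term)
  also have "\<dots> = ((\<Sum>b\<in>F. (cmod (inner_L2 M b u))\<^sup>2) + (\<Sum>b\<in>F. (cmod (inner_L2 M b (T u)))\<^sup>2)) / 2"
    by (simp only: sum_divide_distrib[symmetric] sum.distrib)
  also have "\<dots> \<le> (norm2_L2 M u + norm2_L2 M (T u)) / 2"
    using bessel_inequality[OF F u] bessel_inequality[OF F Tu] by simp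
  finally show ?thesis .
qed

context finite_measure
begin

lemma indicator_diag_sum_bound:
  assumes T: "bounded_op M T" "positive_op M T"
    and K: "\<forall>u\<in>L2 M. norm2_L2 M (T u) \<le> K * norm2_L2 M u"
    and F: "finite F" "orthonormal_L2 M F" and A: "A \<in> sets M"
  shows "(\<Sum>b\<in>F. cmod (inner_L2 M (indicator A) b * inner_L2 M (T b) (indicator A)))
    \<le> (1 + \<bar>K\<bar>) / 2 * measure M A"
proof -
  have chi: "indicator A \<in> L2 M" using A by (rule indicator_L2)
  have "norm2_L2 M (T (indicator A)) \<le> K * norm2_L2 M (indicator A)"
    using K chi by blast
  also have "\<dots> \<le> \<bar>K\<bar> * measure M A"
    by (simp add: norm2_L2_indicator[OF A] mult_right_mono)
  finally have "(norm2_L2 M (indicator A) + norm2_L2 M (T (indicator A))) / 2 \<le> (1 + \<bar>K\<bar>) / 2 * measure M A"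
    by (simp add: norm2_L2_indicator[OF A] field_simps)
  with diag_coefficient_sum_bound[OF T F chi] show ?thesis by linarith
qed

lemma tail_coeff_dominated:
  assumes T: "bounded_op M T" "positive_op M T" and B: "orthonormal_L2 M B"
    and f: "f \<in> borel_measurable M" "integrable M f" "\<forall>x\<in>space M. 0 \<le> f x"
  obtains D where "integrable lborel D"
    "\<And>F l. finite F \<Longrightarrow> F \<subseteq> B \<Longrightarrow> (\<Sum>b\<in>F. norm (indicator {0..} l *\<^sub>R tail_coeff M T f b l)) \<le> D l"
proof -
  obtain K where K: "\<forall>u\<in>L2 M. norm2_L2 M (T u) \<le> K * norm2_L2 M u"
    using T(1) unfolding bounded_op_def by blast
  define D where "D l = indicator {0..} l * ((1 + \<bar>K\<bar>) / 2 * measure M (superlevel M f l))" for l :: real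
  have "integrable lborel D"
    using superlevel_measure_integrable[OF f] unfolding set_integrable_def D_def
    by (simp add: mult.left_commute)
  moreover have "(\<Sum>b\<in>F. norm (indicator {0..} l *\<^sub>R tail_coeff M T f b l)) \<le> D l"
    if F: "finite F" "F \<subseteq> B" for F l
  proof -
    have "superlevel M f l \<in> sets M" using f(1) by measurable
    from indicator_diag_sum_bound[OF T K F(1) orthonormal_L2_subset[OF B F(2)] this]
    show ?thesis
      by (auto simp: tail_coeff_def D_def sum_distrib_left[symmetric] split: split_indicator)
  qed
  ultimately show ?thesis by (rule that)
qed

lemma tail_formula_orthonormal:
  assumes T: "bounded_op M T" "positive_op M T" and B: "orthonormal_L2 M B"
    and f: "f \<in> borel_measurable M" "integrable M (\<lambda>x. (f x)\<^sup>2)" "\<forall>x\<in>space M. 0 \<le> f x"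
  shows "set_integrable lborel {0..}
           (\<lambda>l. infsum (\<lambda>b. inner_L2 M b (T (mu_op M (superlevel M f l) b))) B)"
    and "infsum (\<lambda>b. inner_L2 M b (T (quant M f b))) B
       = (LINT l:{0..}|lborel. infsum (\<lambda>b. inner_L2 M b (T (mu_op M (superlevel M f l) b))) B)"
proof -
  have A: "superlevel M f l \<in> sets M" for l using f(1) by measurable
  have in_L2: "b \<in> L2 M" if "b \<in> B" for b using B that by (rule orthonormal_L2_in_L2)
  define g where "g b l = indicator {0..} l *\<^sub>R tail_coeff M T f b l" for b and l :: real
  obtain S where S: "countable S" "S \<subseteq> B"
    and outside_S: "\<And>b l. b \<in> B \<Longrightarrow> b \<notin> S \<Longrightarrow> inner_L2 M (indicator (superlevel M f l)) b = 0"
    using countable_superlevel_support[OF B f(1)] by blast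
  have g_zero: "g b l = 0" if "b \<in> B" "b \<notin> S" for b l
    using outside_S[OF that] by (simp add: g_def tail_coeff_def)
  have g_int: "integrable lborel (g b)" if "b \<in> B" for b
    using diag_quant(1)[OF T f in_L2[OF that]] unfolding set_integrable_def g_def .
  obtain D where "integrable lborel D" "\<And>F l. finite F \<Longrightarrow> F \<subseteq> B \<Longrightarrow> (\<Sum>b\<in>F. norm (g b l)) \<le> D l"
    using tail_coeff_dominated[OF T B f(1) square_integrable_imp_integrable[OF f(1,2)] f(3)]
    unfolding g_def by blast
  note interchange = infsum_integral_interchange[OF S g_zero g_int this(2,1)]
  have diag_sum: "infsum (\<lambda>b. g b l) B = indicator {0..} l *\<^sub>R
      infsum (\<lambda>b. inner_L2 M b (T (mu_op M (superlevel M f l) b))) B" for l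
    unfolding g_def infsum_scaleR_right
    by (intro arg_cong[where f="scaleR _"] infsum_cong) (simp add: diag_mu_op[OF T A in_L2] tail_coeff_def)
  show "set_integrable lborel {0..}
      (\<lambda>l. infsum (\<lambda>b. inner_L2 M b (T (mu_op M (superlevel M f l) b))) B)"
    using interchange(1) unfolding set_integrable_def diag_sum .
  have "infsum (\<lambda>b. inner_L2 M b (T (quant M f b))) B = infsum (\<lambda>b. integral\<^sup>L lborel (g b)) B"
  proof (rule infsum_cong)
    fix b assume "b \<in> B"
    from diag_quant(2)[OF T f in_L2[OF this]]
    show "inner_L2 M b (T (quant M f b)) = integral\<^sup>L lborel (g b)"
      unfolding set_lebesgue_integral_def g_def .
  qed
  also have "\<dots> = integral\<^sup>L lborel (\<lambda>l. infsum (\<lambda>b. g b l) B)"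
    using interchange(2) by (rule infsumI)
  finally show "infsum (\<lambda>b. inner_L2 M b (T (quant M f b))) B
      = (LINT l:{0..}|lborel. infsum (\<lambda>b. inner_L2 M b (T (mu_op M (superlevel M f l) b))) B)"
    unfolding set_lebesgue_integral_def diag_sum .
qed

end

text \<open>The theorem: both traces are diagonal sums over the orthonormal basis chosen in trace_op,
  and rho is bounded and positive.\<close>

theorem theorem3p4:
  fixes M :: "'a measure" and \<rho> :: "('a \<Rightarrow> complex) \<Rightarrow> ('a \<Rightarrow> complex)" and f :: "'a \<Rightarrow> real"
  assumes "prob_space M"
    and "density_op M \<rho>"
    and "f \<in> borel_measurable M" and "integrable M (\<lambda>x. (f x)\<^sup>2)"
    and "\<forall>x\<in>space M. 0 \<le> f x"
  shows "set_integrable lborel {0..} (\<lambda>l::real. mu_rho M \<rho> {x\<in>space M. f x > l})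
       \<and> q_integral M \<rho> f = (LINT l:{0..}|lborel. mu_rho M \<rho> {x\<in>space M. f x > l})"
proof -
  interpret prob_space M by (rule assms(1))
  have \<rho>: "bounded_op M \<rho>" "positive_op M \<rho>"
    using assms(2) by (simp_all add: density_op_def)
  obtain B0 where "onb M B0"
    using assms(2) unfolding density_op_def by blast
  then have B: "orthonormal_L2 M (SOME B. onb M B)"
    by (intro onb_imp_orthonormal_L2 someI)
  note formula = tail_formula_orthonormal[OF \<rho> B assms(3-5)]
  show ?thesis
    unfolding q_integral_def mu_rho_def trace_op_def comp_def
    using formula by simp
qed

end
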